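(* Assume the setting and notation in the context, and suppose the selection threshold depends only on the test scores: $\hat\tau=\tau(T_i: i\in\mathcal U)$ for a deterministic measurable function $\tau:\mathbb R^m\to\mathbb R$ (so $\hat\tau$ is independent of the calibration data). Let $\hat{\mathcal S}_u=\{i\in\mathcal U:T_i\le\hat\tau\}$. For $j\in\mathcal U$ and $t\in\mathbb R$, let $\hat{\mathcal S}_u^{j\leftarrow t}$ be the selected test set obtained by the same rule after replacing $T_j$ by $t$ (including recomputing the threshold), and for $j\in\hat{\mathcal S}_u$ let $M^j_{\min}=\min_{t\in\mathbb R}\{|\hat{\mathcal S}_u^{j\leftarrow t}| : j\in\hat{\mathcal S}_u^{j\leftarrow t}\}$ and $\alpha_j=\alpha M^j_{\min}/m$. Define, for $j\in\hat{\mathcal S}_u$, $\mathrm{PI}^{\mathrm{AD}}_j=[\hat\mu(X_j)-q_j,\ \hat\mu(X_j)+q_j]$ where $q_j$ is the $\lceil(1-\alpha_j)(n+1)\rceil$-th smallest value of $\{R_i\}_{i\in\mathcal C}$ ($+\infty$ if this index exceeds $n$). Then the FCR of the intervals $\{\mathrm{PI}^{\mathrm{AD}}_j\}_{j\in\hat{\mathcal S}_u}$ satisfies $\mathrm{FCR}\le\alpha$.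
   Context: Setting: $\hat\mu:\mathbb R^d\to\mathbb R$ (prediction model) and $g:\mathbb R^d\to\mathbb R$ (selection score) are fixed deterministic measurable functions. Calibration indices form a set $\mathcal C$ with $|\mathcal C|=n$; test indices a disjoint set $\mathcal U$ with $|\mathcal U|=m$. The pairs $(X_i,Y_i)\in\mathbb R^d\times\mathbb R$, $i\in\mathcal C\cup\mathcal U$, are i.i.d. Scores $T_i=g(X_i)$, residuals $R_i=|Y_i-\hat\mu(X_i)|$, $\alpha\in(0,1)$. For a selected test set $\hat{\mathcal S}_u$ with intervals $\mathrm{PI}_j$, $\mathrm{FCR}=\mathbb E\Big[\frac{|\{j\in\hat{\mathcal S}_u: Y_j\notin\mathrm{PI}_j\}|}{\max\{|\hat{\mathcal S}_u|,1\}}\Big]$. *)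

theory Defs
  imports "HOL-Analysis.Analysis" "HOL-Probability.Probability" "HOL-Library.Multiset"
begin

definition sel :: "nat set \<Rightarrow> ((nat \<Rightarrow> real) \<Rightarrow> real) \<Rightarrow> (nat \<Rightarrow> real) \<Rightarrow> nat set" where
  "sel U \<tau> T = {i \<in> U. T i \<le> \<tau> (restrict T U)}"

definition Mmin :: "nat set \<Rightarrow> ((nat \<Rightarrow> real) \<Rightarrow> real) \<Rightarrow> (nat \<Rightarrow> real) \<Rightarrow> nat \<Rightarrow> nat" where
  "Mmin U \<tau> T j = Min {card (sel U \<tau> (T(j := t))) | t. j \<in> sel U \<tau> (T(j := t))}"

definition alpha_adj :: "real \<Rightarrow> nat set \<Rightarrow> ((nat \<Rightarrow> real) \<Rightarrow> real) \<Rightarrow> (nat \<Rightarrow> real) \<Rightarrow> nat \<Rightarrow> real" where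
  "alpha_adj \<alpha> U \<tau> T j = \<alpha> * real (Mmin U \<tau> T j) / real (card U)"

definition conf_q :: "real \<Rightarrow> nat set \<Rightarrow> (nat \<Rightarrow> real) \<Rightarrow> ereal" where
  "conf_q a C R = (let k = \<lceil>(1 - a) * (real (card C) + 1)\<rceil> in
     if k > int (card C) then \<infinity>
     else ereal (sorted_list_of_multiset (image_mset R (mset_set C)) ! (nat k - 1)))"

definition score :: "('x \<Rightarrow> real) \<Rightarrow> (nat \<Rightarrow> 'x \<times> real) \<Rightarrow> nat \<Rightarrow> real" where
  "score g \<omega> i = g (fst (\<omega> i))"

definition resid :: "('x \<Rightarrow> real) \<Rightarrow> (nat \<Rightarrow> 'x \<times> real) \<Rightarrow> nat \<Rightarrow> real" where
  "resid \<mu> \<omega> i = \<bar>snd (\<omega> i) - \<mu> (fst (\<omega> i))\<bar>"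

definition PI_AD :: "('x \<Rightarrow> real) \<Rightarrow> ('x \<Rightarrow> real) \<Rightarrow> real \<Rightarrow> nat set \<Rightarrow> nat set
    \<Rightarrow> ((nat \<Rightarrow> real) \<Rightarrow> real) \<Rightarrow> (nat \<Rightarrow> 'x \<times> real) \<Rightarrow> nat \<Rightarrow> real set" where
  "PI_AD \<mu> g \<alpha> C U \<tau> \<omega> j =
     (let q = conf_q (alpha_adj \<alpha> U \<tau> (score g \<omega>) j) C (resid \<mu> \<omega>)
      in {y. ereal (\<mu> (fst (\<omega> j))) - q \<le> ereal y \<and> ereal y \<le> ereal (\<mu> (fst (\<omega> j))) + q})"

definition FCR :: "'w measure \<Rightarrow> ('w \<Rightarrow> nat set) \<Rightarrow> ('w \<Rightarrow> nat \<Rightarrow> real set) \<Rightarrow> ('w \<Rightarrow> nat \<Rightarrow> real) \<Rightarrow> real" where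
  "FCR M S PI Y = (\<integral>\<omega>. real (card {j \<in> S \<omega>. Y \<omega> j \<notin> PI \<omega> j}) / real (max (card (S \<omega>)) 1) \<partial>M)"

end

theory Submission
  imports Defs "HOL-Combinatorics.Permutations"
begin

text \<open>Since \<open>M\<^sup>j\<^sub>m\<^sub>i\<^sub>n \<le> |S|\<close> for every selected \<open>j\<close>, the false discovery proportion is at most
  the sum over test points \<open>j\<close> of \<open>1 / M\<^sup>j\<^sub>m\<^sub>i\<^sub>n\<close> when \<open>j\<close> is miscovered.
  Selectability of \<open>j\<close>, \<open>M\<^sup>j\<^sub>m\<^sub>i\<^sub>n\<close> and hence \<open>\<alpha>\<^sub>j\<close> depend only on the scores of the other
  test points, so they are unchanged when the data of \<open>j\<close> is exchanged with that of a
  calibration point. Averaged over these exchanges, \<open>j\<close> is miscovered iff its residual exceeds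
  the conformal quantile of the other \<open>|C|\<close> residuals, which happens for at most
  \<open>\<alpha>\<^sub>j (|C| + 1)\<close> of the \<open>|C| + 1\<close> points; each test point thus contributes at most
  \<open>\<alpha>\<^sub>j / M\<^sup>j\<^sub>m\<^sub>i\<^sub>n = \<alpha> / |U|\<close>. Exchangeability of the i.i.d. sample turns the average over
  permutations into the expectation.\<close>

lemma sorted_nth_less_imp_length_filter_ge:
  fixes xs :: "'a::linorder list"
  assumes "sorted xs" "0 < k" "k \<le> length xs" "xs ! (k - 1) < r"
  shows "k \<le> length (filter (\<lambda>x. x < r) xs)"
proof -
  have "\<forall>x\<in>set (take k xs). x < r"
  proof
    fix x assume "x \<in> set (take k xs)"
    then obtain p where "p < k" "x = xs ! p"
      using assms(3) by (auto simp: in_set_conv_nth)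
    moreover have "xs ! p \<le> xs ! (k - 1)"
      using assms \<open>p < k\<close> by (intro sorted_nth_mono) auto
    ultimately show "x < r"
      using assms(4) by simp
  qed
  then have "k = length (filter (\<lambda>x. x < r) (take k xs))"
    using assms(3) by simp
  also have "\<dots> \<le> length (filter (\<lambda>x. x < r) xs)"
    by (metis append_take_drop_id filter_append le_add1 length_append)
  finally show ?thesis .
qed

text \<open>Among the elements ranked at position at least \<open>k\<close>, the one of least value has at
  least \<open>k\<close> elements below it, none of which is ranked that high.\<close>
lemma card_rank_ge_add_le:
  fixes R :: "'a \<Rightarrow> 'b::linorder"
  assumes "finite W" "k \<le> card W"
  shows "card {i\<in>W. k \<le> card {l\<in>W. R l < R i}} + k \<le> card W"
proof (cases "{i\<in>W. k \<le> card {l\<in>W. R l < R i}} = {}")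
  case False
  let ?B = "{i\<in>W. k \<le> card {l\<in>W. R l < R i}}"
  have fin: "finite (R ` ?B)"
    using assms(1) by simp
  obtain b where "b \<in> ?B" "R b = Min (R ` ?B)"
    using Min_in[OF fin] False by auto
  then have b: "b \<in> ?B" "\<And>x. x \<in> ?B \<Longrightarrow> R b \<le> R x"
    using fin by auto
  have "l \<notin> ?B" if "R l < R b" for l
    using b(2)[of l] that by (meson leD)
  then have "{l\<in>W. R l < R b} \<subseteq> W - ?B"
    by blast
  then have "card {l\<in>W. R l < R b} \<le> card (W - ?B)"
    using assms(1) by (intro card_mono) auto
  then have "k \<le> card (W - ?B)"
    using b(1) by simp
  moreover have "card (W - ?B) = card W - card ?B" "card ?B \<le> card W"
    using assms(1) by (auto intro: card_Diff_subset card_mono)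
  ultimately show ?thesis by linarith
next
  case True
  with assms(2) show ?thesis
    by (metis add_0 card.empty)
qed

lemma length_filter_sorted_image_mset:
  assumes "finite A"
  shows "length (filter P (sorted_list_of_multiset (image_mset R (mset_set A)))) = card {l\<in>A. P (R l)}"
proof -
  have "length (filter P (sorted_list_of_multiset (image_mset R (mset_set A))))
      = size (filter_mset P (image_mset R (mset_set A)))"
    by (metis mset_filter mset_sorted_list_of_multiset size_mset)
  also have "\<dots> = card {l\<in>A. P (R l)}"
    using assms by (simp add: filter_mset_image_mset)
  finally show ?thesis .
qed

text \<open>The quantile of the \<open>n = |W| - 1\<close> other residuals has index \<open>\<lceil>(1 - a)(n + 1)\<rceil>\<close>,
  which is \<open>\<lceil>(1 - a) |W|\<rceil>\<close>.\<close>
lemma conf_q_less_imp_rank_ge: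
  fixes R :: "nat \<Rightarrow> real"
  assumes W: "finite W" "i \<in> W" and less: "conf_q a (W - {i}) R < ereal (R i)"
  shows "nat \<lceil>(1 - a) * real (card W)\<rceil> \<le> card {l\<in>W. R l < R i}"
proof -
  let ?xs = "sorted_list_of_multiset (image_mset R (mset_set (W - {i})))"
  define k where "k = \<lceil>(1 - a) * real (card W)\<rceil>"
  have card: "card W = Suc (card (W - {i}))"
    by (rule card_Suc_Diff1[OF W, symmetric])
  have len: "length ?xs = card (W - {i})"
    by (metis mset_sorted_list_of_multiset size_image_mset size_mset size_mset_set)
  have q: "conf_q a (W - {i}) R
      = (if k > int (card (W - {i})) then \<infinity> else ereal (?xs ! (nat k - 1)))"
    unfolding conf_q_def Let_def k_def card by (simp add: add.commute)
  show ?thesis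
  proof (cases "k \<le> 0")
    case False
    have k_le: "\<not> k > int (card (W - {i}))"
      using less q by auto
    with less q have "?xs ! (nat k - 1) < R i"
      by simp
    then have "nat k \<le> length (filter (\<lambda>x. x < R i) ?xs)"
      using False k_le len by (intro sorted_nth_less_imp_length_filter_ge) auto
    also have "\<dots> = card {l\<in>W - {i}. R l < R i}"
      using W by (simp add: length_filter_sorted_image_mset)
    also have "\<dots> \<le> card {l\<in>W. R l < R i}"
      using W by (intro card_mono) auto
    finally show ?thesis
      unfolding k_def .
  qed (simp add: k_def)
qed

lemma card_conf_q_less_le:
  fixes R :: "nat \<Rightarrow> real"
  assumes W: "finite W" and a: "0 \<le> a"
  shows "real (card {i\<in>W. conf_q a (W - {i}) R < ereal (R i)}) \<le> a * real (card W)"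
proof -
  let ?S = "{i\<in>W. conf_q a (W - {i}) R < ereal (R i)}"
  define k where "k = nat \<lceil>(1 - a) * real (card W)\<rceil>"
  have "k \<le> card W"
    using a unfolding k_def by (simp add: mult_nonneg_nonneg algebra_simps)
  have "?S \<subseteq> {i\<in>W. k \<le> card {l\<in>W. R l < R i}}"
    using conf_q_less_imp_rank_ge[OF W] unfolding k_def by blast
  then have "card ?S \<le> card {i\<in>W. k \<le> card {l\<in>W. R l < R i}}"
    using W by (intro card_mono) auto
  then have "card ?S + k \<le> card W"
    using card_rank_ge_add_le[OF W \<open>k \<le> card W\<close>, of R] by linarith
  moreover have "(1 - a) * real (card W) \<le> real k"
    unfolding k_def by (rule real_nat_ceiling_ge)
  ultimately show ?thesis
    by (simp add: algebra_simps)
qed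

lemma conf_q_comp_inj:
  assumes "inj_on h C"
  shows "conf_q a C (R \<circ> h) = conf_q a (h ` C) R"
proof -
  have "image_mset (R \<circ> h) (mset_set C) = image_mset R (image_mset h (mset_set C))"
    by (simp add: multiset.map_comp)
  also have "\<dots> = image_mset R (mset_set (h ` C))"
    by (simp only: image_mset_mset_set[OF assms])
  finally have mset_eq: "image_mset (R \<circ> h) (mset_set C) = image_mset R (mset_set (h ` C))" .
  have card_eq: "card (h ` C) = card C"
    by (rule card_image[OF assms])
  show ?thesis
    unfolding conf_q_def by (simp only: mset_eq card_eq)
qed

lemma transpose_image_insert:
  "j \<notin> C \<Longrightarrow> i \<in> insert j C \<Longrightarrow> Transposition.transpose i j ` C = insert j C - {i}"
  by (auto simp: Transposition.transpose_def image_iff)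

lemma sel_subset: "sel U \<tau> T \<subseteq> U"
  by (auto simp: sel_def)

lemma sel_cong: "(\<And>l. l \<in> U \<Longrightarrow> T l = T' l) \<Longrightarrow> sel U \<tau> T = sel U \<tau> T'"
proof -
  assume "\<And>l. l \<in> U \<Longrightarrow> T l = T' l"
  moreover from this have "restrict T U = restrict T' U"
    by (rule restrict_ext)
  ultimately show ?thesis
    unfolding sel_def by auto
qed

lemma sel_fun_upd_cong:
  "(\<And>l. l \<in> U \<Longrightarrow> l \<noteq> j \<Longrightarrow> T l = T' l) \<Longrightarrow> sel U \<tau> (T(j := t)) = sel U \<tau> (T'(j := t))"
  by (rule sel_cong) simp

definition selectable :: "nat set \<Rightarrow> ((nat \<Rightarrow> real) \<Rightarrow> real) \<Rightarrow> (nat \<Rightarrow> real) \<Rightarrow> nat \<Rightarrow> bool" where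
  "selectable U \<tau> T j \<longleftrightarrow> (\<exists>t. j \<in> sel U \<tau> (T(j := t)))"

lemma selectable_cong:
  "(\<And>l. l \<in> U \<Longrightarrow> l \<noteq> j \<Longrightarrow> T l = T' l) \<Longrightarrow> selectable U \<tau> T j = selectable U \<tau> T' j"
proof -
  assume "\<And>l. l \<in> U \<Longrightarrow> l \<noteq> j \<Longrightarrow> T l = T' l"
  then have "\<And>t. sel U \<tau> (T(j := t)) = sel U \<tau> (T'(j := t))"
    by (rule sel_fun_upd_cong)
  then show ?thesis
    unfolding selectable_def by simp
qed

lemma Mmin_cong:
  "(\<And>l. l \<in> U \<Longrightarrow> l \<noteq> j \<Longrightarrow> T l = T' l) \<Longrightarrow> Mmin U \<tau> T j = Mmin U \<tau> T' j"
proof -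
  assume "\<And>l. l \<in> U \<Longrightarrow> l \<noteq> j \<Longrightarrow> T l = T' l"
  then have "\<And>t. sel U \<tau> (T(j := t)) = sel U \<tau> (T'(j := t))"
    by (rule sel_fun_upd_cong)
  then show ?thesis
    unfolding Mmin_def by simp
qed

lemma finite_Mmin_candidates:
  assumes "finite U"
  shows "finite {card (sel U \<tau> (T(j := t))) | t. j \<in> sel U \<tau> (T(j := t))}"
proof (rule finite_subset)
  show "{card (sel U \<tau> (T(j := t))) | t. j \<in> sel U \<tau> (T(j := t))} \<subseteq> {..card U}"
    using assms sel_subset by (fastforce intro!: card_mono)
qed simp

lemma Mmin_ge_1:
  assumes "finite U" "selectable U \<tau> T j"
  shows "1 \<le> Mmin U \<tau> T j"
proof -
  have "Mmin U \<tau> T j \<in> {card (sel U \<tau> (T(j := t))) | t. j \<in> sel U \<tau> (T(j := t))}"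
    unfolding Mmin_def using assms(2) finite_Mmin_candidates[OF assms(1)]
    by (intro Min_in) (auto simp: selectable_def)
  then obtain t where t: "Mmin U \<tau> T j = card (sel U \<tau> (T(j := t)))" "j \<in> sel U \<tau> (T(j := t))"
    by blast
  have "finite (sel U \<tau> (T(j := t)))"
    by (rule finite_subset[OF sel_subset assms(1)])
  with t(2) have "0 < card (sel U \<tau> (T(j := t)))"
    by (auto simp: card_gt_0_iff)
  with t(1) show ?thesis
    by simp
qed

lemma Mmin_le_card_sel:
  assumes "finite U" "j \<in> sel U \<tau> T"
  shows "Mmin U \<tau> T j \<le> card (sel U \<tau> T)"
proof -
  have "card (sel U \<tau> (T(j := T j))) \<in> {card (sel U \<tau> (T(j := t))) | t. j \<in> sel U \<tau> (T(j := t))}"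
    using assms(2) by (intro CollectI exI[of _ "T j"]) simp
  then show ?thesis
    unfolding Mmin_def using finite_Mmin_candidates[OF assms(1)] by simp
qed

lemma notin_PI_AD_iff:
  "snd (\<omega> j) \<notin> PI_AD \<mu> g \<alpha> C U \<tau> \<omega> j \<longleftrightarrow>
     conf_q (alpha_adj \<alpha> U \<tau> (score g \<omega>) j) C (resid \<mu> \<omega>) < ereal (resid \<mu> \<omega> j)"
proof -
  define q where "q = conf_q (alpha_adj \<alpha> U \<tau> (score g \<omega>) j) C (resid \<mu> \<omega>)"
  show ?thesis
    unfolding PI_AD_def Let_def q_def[symmetric] resid_def by (cases q) auto
qed

definition FDP :: "('x \<Rightarrow> real) \<Rightarrow> ('x \<Rightarrow> real) \<Rightarrow> real \<Rightarrow> nat set \<Rightarrow> nat set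
    \<Rightarrow> ((nat \<Rightarrow> real) \<Rightarrow> real) \<Rightarrow> (nat \<Rightarrow> 'x \<times> real) \<Rightarrow> real" where
  "FDP \<mu> g \<alpha> C U \<tau> \<omega> =
     real (card {j \<in> sel U \<tau> (score g \<omega>). snd (\<omega> j) \<notin> PI_AD \<mu> g \<alpha> C U \<tau> \<omega> j})
       / real (max (card (sel U \<tau> (score g \<omega>))) 1)"

text \<open>Unlike the share \<open>1 / |S|\<close> of a selected \<open>j\<close> in the FDP, which it dominates,
  this weight does not depend on the score \<open>T\<^sub>j\<close>.\<close>
definition miscov_weight :: "('x \<Rightarrow> real) \<Rightarrow> ('x \<Rightarrow> real) \<Rightarrow> real \<Rightarrow> nat set \<Rightarrow> nat set
    \<Rightarrow> ((nat \<Rightarrow> real) \<Rightarrow> real) \<Rightarrow> (nat \<Rightarrow> 'x \<times> real) \<Rightarrow> nat \<Rightarrow> real" where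
  "miscov_weight \<mu> g \<alpha> C U \<tau> \<omega> j =
     (if selectable U \<tau> (score g \<omega>) j \<and> snd (\<omega> j) \<notin> PI_AD \<mu> g \<alpha> C U \<tau> \<omega> j
      then 1 / real (Mmin U \<tau> (score g \<omega>) j) else 0)"

lemma miscov_weight_nonneg: "0 \<le> miscov_weight \<mu> g \<alpha> C U \<tau> \<omega> j"
  unfolding miscov_weight_def by simp

lemma FDP_le_sum_miscov_weight:
  assumes U: "finite U"
  shows "FDP \<mu> g \<alpha> C U \<tau> \<omega> \<le> (\<Sum>j\<in>U. miscov_weight \<mu> g \<alpha> C U \<tau> \<omega> j)"
proof -
  let ?S = "sel U \<tau> (score g \<omega>)"
  let ?Mis = "{j \<in> ?S. snd (\<omega> j) \<notin> PI_AD \<mu> g \<alpha> C U \<tau> \<omega> j}"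
  have weight_ge: "1 / real (card ?S) \<le> miscov_weight \<mu> g \<alpha> C U \<tau> \<omega> j" if j: "j \<in> ?Mis" for j
  proof -
    have "selectable U \<tau> (score g \<omega>) j"
      using j unfolding selectable_def by (metis (mono_tags, lifting) fun_upd_triv mem_Collect_eq)
    moreover from this have "1 \<le> Mmin U \<tau> (score g \<omega>) j"
      by (rule Mmin_ge_1[OF U])
    moreover have "Mmin U \<tau> (score g \<omega>) j \<le> card ?S"
      using j by (intro Mmin_le_card_sel[OF U]) simp
    ultimately show ?thesis
      using j unfolding miscov_weight_def by (simp add: frac_le)
  qed
  have "FDP \<mu> g \<alpha> C U \<tau> \<omega> = real (card ?Mis) / real (card ?S)"
  proof (cases "?S = {}")
    case False
    moreover have "finite ?S"
      by (rule finite_subset[OF sel_subset U])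
    ultimately have "1 \<le> card ?S"
      by (simp add: Suc_le_eq card_gt_0_iff)
    then show ?thesis
      unfolding FDP_def by (simp add: max_def)
  qed (simp add: FDP_def)
  also have "\<dots> \<le> (\<Sum>j\<in>?Mis. miscov_weight \<mu> g \<alpha> C U \<tau> \<omega> j)"
    using sum_mono[of ?Mis "\<lambda>_. 1 / real (card ?S)"] weight_ge by simp
  also have "\<dots> \<le> (\<Sum>j\<in>U. miscov_weight \<mu> g \<alpha> C U \<tau> \<omega> j)"
    using U sel_subset by (intro sum_mono2) (auto simp: miscov_weight_nonneg)
  finally show ?thesis .
qed

text \<open>Exchanging the data of the test point \<open>j\<close> with the point \<open>i\<close> of \<open>C \<union> {j}\<close> leaves
  the scores of the other test points, hence \<open>M\<^sup>j\<^sub>m\<^sub>i\<^sub>n\<close> and \<open>\<alpha>\<^sub>j\<close>, unchanged, while \<open>j\<close> is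
  then miscovered iff \<open>R\<^sub>i\<close> exceeds the conformal quantile of the other residuals.\<close>
lemma sum_miscov_weight_transpose_le:
  assumes C: "finite C" and U: "finite U" and CU: "C \<inter> U = {}" and j: "j \<in> U" and \<alpha>: "0 \<le> \<alpha>"
  shows "(\<Sum>i\<in>insert j C. miscov_weight \<mu> g \<alpha> C U \<tau> (\<omega> \<circ> Transposition.transpose i j) j)
           \<le> real (card (insert j C)) * (\<alpha> / real (card U))"
proof -
  let ?W = "insert j C"
  let ?\<omega> = "\<lambda>i. \<omega> \<circ> Transposition.transpose i j"
  define M where "M = Mmin U \<tau> (score g \<omega>) j"
  define a where "a = \<alpha> * real M / real (card U)"
  let ?exceeds = "\<lambda>i. conf_q a (?W - {i}) (resid \<mu> \<omega>) < ereal (resid \<mu> \<omega> i)"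
  have jC: "j \<notin> C"
    using CU j by auto
  have score: "score g (?\<omega> i) l = score g \<omega> l" if "i \<in> ?W" "l \<in> U" "l \<noteq> j" for i l
    using that jC CU by (auto simp: score_def Transposition.transpose_def)
  have weight: "miscov_weight \<mu> g \<alpha> C U \<tau> (?\<omega> i) j
      = (if selectable U \<tau> (score g \<omega>) j \<and> ?exceeds i then 1 / real M else 0)" if i: "i \<in> ?W" for i
  proof -
    have "resid \<mu> (?\<omega> i) = resid \<mu> \<omega> \<circ> Transposition.transpose i j"
      by (auto simp: resid_def)
    then have "conf_q a C (resid \<mu> (?\<omega> i)) = conf_q a (?W - {i}) (resid \<mu> \<omega>)"
      using conf_q_comp_inj[of "Transposition.transpose i j" C a "resid \<mu> \<omega>"]
      by (simp add: transpose_image_insert[OF jC i])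
    moreover have "resid \<mu> (?\<omega> i) j = resid \<mu> \<omega> i"
      by (simp add: resid_def)
    moreover have "selectable U \<tau> (score g (?\<omega> i)) j = selectable U \<tau> (score g \<omega>) j"
      by (rule selectable_cong) (rule score[OF i])
    moreover have "Mmin U \<tau> (score g (?\<omega> i)) j = M"
      unfolding M_def by (rule Mmin_cong) (rule score[OF i])
    ultimately show ?thesis
      unfolding miscov_weight_def notin_PI_AD_iff alpha_adj_def a_def by simp
  qed
  show ?thesis
  proof (cases "selectable U \<tau> (score g \<omega>) j")
    case False
    then show ?thesis
      using weight \<alpha> by simp
  next
    case True
    have M: "1 \<le> M"
      unfolding M_def by (rule Mmin_ge_1[OF U True])
    have "(\<Sum>i\<in>?W. miscov_weight \<mu> g \<alpha> C U \<tau> (?\<omega> i) j) = (\<Sum>i\<in>?W. if ?exceeds i then 1 / real M else 0)"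
      using True weight by simp
    also have "\<dots> = (\<Sum>i\<in>{i\<in>?W. ?exceeds i}. 1 / real M)"
      using C by (intro sum.inter_filter[symmetric]) simp
    also have "\<dots> = real (card {i\<in>?W. ?exceeds i}) / real M"
      by simp
    also have "\<dots> \<le> a * real (card ?W) / real M"
      using card_conf_q_less_le[of ?W a "resid \<mu> \<omega>"] C \<alpha> M
      by (intro divide_right_mono) (auto simp: a_def)
    also have "\<dots> = real (card ?W) * (\<alpha> / real (card U))"
      using M by (simp add: a_def)
    finally show ?thesis .
  qed
qed

text \<open>Right composition with a transposition is a bijection on the permutations of \<open>V\<close>.\<close>
lemma sum_permutations_le_of_sum_transpose_le:
  fixes h :: "('a \<Rightarrow> 'b) \<Rightarrow> real"
  assumes V: "finite V" and W: "W \<subseteq> V" "j \<in> W"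
    and bound: "\<And>\<omega>. (\<Sum>i\<in>W. h (\<omega> \<circ> Transposition.transpose i j)) \<le> real (card W) * c"
  shows "(\<Sum>\<pi>\<in>{\<pi>. \<pi> permutes V}. h (\<omega> \<circ> \<pi>)) \<le> real (card {\<pi>. \<pi> permutes V}) * c"
proof -
  let ?P = "{\<pi>. \<pi> permutes V}"
  have finW: "finite W"
    using V W(1) by (rule finite_subset[rotated])
  have shift: "(\<Sum>\<pi>\<in>?P. h (\<omega> \<circ> \<pi>)) = (\<Sum>\<pi>\<in>?P. h (\<omega> \<circ> \<pi> \<circ> Transposition.transpose i j))"
    if "i \<in> W" for i
  proof -
    have "Transposition.transpose i j permutes V"
      using that W by (intro permutes_swap_id) auto
    from sum_permutations_compose_right[OF this, of "\<lambda>\<pi>. h (\<omega> \<circ> \<pi>)"]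
    show ?thesis
      by (simp add: o_assoc)
  qed
  have "real (card W) * (\<Sum>\<pi>\<in>?P. h (\<omega> \<circ> \<pi>)) = (\<Sum>i\<in>W. \<Sum>\<pi>\<in>?P. h (\<omega> \<circ> \<pi>))"
    by simp
  also have "\<dots> = (\<Sum>i\<in>W. \<Sum>\<pi>\<in>?P. h (\<omega> \<circ> \<pi> \<circ> Transposition.transpose i j))"
    using shift by (rule sum.cong[OF refl])
  also have "\<dots> = (\<Sum>\<pi>\<in>?P. \<Sum>i\<in>W. h (\<omega> \<circ> \<pi> \<circ> Transposition.transpose i j))"
    by (rule sum.swap)
  also have "\<dots> \<le> (\<Sum>\<pi>\<in>?P. real (card W) * c)"
    by (intro sum_mono bound)
  also have "\<dots> = real (card W) * (real (card ?P) * c)"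
    by simp
  finally have "real (card W) * (\<Sum>\<pi>\<in>?P. h (\<omega> \<circ> \<pi>)) \<le> real (card W) * (real (card ?P) * c)" .
  moreover have "0 < real (card W)"
    using finW W(2) by (auto simp: card_gt_0_iff)
  ultimately show ?thesis
    by (rule mult_left_le_imp_le)
qed

lemma sum_permutations_FDP_le:
  assumes C: "finite C" and U: "finite U" and CU: "C \<inter> U = {}" and \<alpha>: "0 \<le> \<alpha>"
  shows "(\<Sum>\<pi>\<in>{\<pi>. \<pi> permutes (C \<union> U)}. FDP \<mu> g \<alpha> C U \<tau> (\<omega> \<circ> \<pi>))
           \<le> real (card {\<pi>. \<pi> permutes (C \<union> U)}) * \<alpha>"
proof -
  let ?P = "{\<pi>. \<pi> permutes (C \<union> U)}"
  have "(\<Sum>\<pi>\<in>?P. FDP \<mu> g \<alpha> C U \<tau> (\<omega> \<circ> \<pi>)) \<le> (\<Sum>\<pi>\<in>?P. \<Sum>j\<in>U. miscov_weight \<mu> g \<alpha> C U \<tau> (\<omega> \<circ> \<pi>) j)"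
    by (intro sum_mono FDP_le_sum_miscov_weight[OF U])
  also have "\<dots> = (\<Sum>j\<in>U. \<Sum>\<pi>\<in>?P. miscov_weight \<mu> g \<alpha> C U \<tau> (\<omega> \<circ> \<pi>) j)"
    by (rule sum.swap)
  also have "\<dots> \<le> (\<Sum>j\<in>U. real (card ?P) * (\<alpha> / real (card U)))"
  proof (rule sum_mono)
    fix j assume j: "j \<in> U"
    show "(\<Sum>\<pi>\<in>?P. miscov_weight \<mu> g \<alpha> C U \<tau> (\<omega> \<circ> \<pi>) j) \<le> real (card ?P) * (\<alpha> / real (card U))"
      using C U j sum_permutations_le_of_sum_transpose_le[where W = "insert j C"
          and h = "\<lambda>\<omega>. miscov_weight \<mu> g \<alpha> C U \<tau> \<omega> j",
          OF _ _ _ sum_miscov_weight_transpose_le[OF C U CU j \<alpha>]]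
      by blast
  qed
  also have "\<dots> \<le> real (card ?P) * \<alpha>"
    using \<alpha> by (cases "card U = 0") auto
  finally show ?thesis .
qed

lemma PiM_compose_permutes:
  fixes D :: "'a measure" and f :: "('b \<Rightarrow> 'a) \<Rightarrow> real"
  assumes D: "prob_space D" and \<pi>: "\<pi> permutes V" and f: "integrable (Pi\<^sub>M V (\<lambda>_. D)) f"
  shows "integrable (Pi\<^sub>M V (\<lambda>_. D)) (\<lambda>\<omega>. f (\<omega> \<circ> \<pi>))"
    and "(\<integral>\<omega>. f (\<omega> \<circ> \<pi>) \<partial>Pi\<^sub>M V (\<lambda>_. D)) = (\<integral>\<omega>. f \<omega> \<partial>Pi\<^sub>M V (\<lambda>_. D))"
proof -
  let ?P = "Pi\<^sub>M V (\<lambda>_. D)"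
  let ?\<phi> = "\<lambda>\<omega>. \<lambda>n\<in>V. \<omega> (\<pi> n)"
  have into: "\<pi> \<in> V \<rightarrow> V"
    using permutes_in_image[OF \<pi>] by auto
  have distr: "distr ?P ?P ?\<phi> = ?P"
    using distr_PiM_reindex[of V "\<lambda>_. D" \<pi> V, OF _ permutes_inj_on[OF \<pi>] into] D by simp
  have meas: "?\<phi> \<in> measurable ?P ?P"
    using into by (intro measurable_restrict measurable_component_singleton) auto
  have fm: "f \<in> borel_measurable ?P"
    using f by simp
  \<comment> \<open>off \<open>V\<close>, \<open>\<pi>\<close> is the identity and points of the product space are \<open>undefined\<close>\<close>
  have \<phi>_eq: "f (?\<phi> \<omega>) = f (\<omega> \<circ> \<pi>)" if "\<omega> \<in> space ?P" for \<omega>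
  proof -
    have "?\<phi> \<omega> = \<omega> \<circ> \<pi>"
      using that permutes_not_in[OF \<pi>] by (auto simp: space_PiM PiE_def extensional_def)
    then show ?thesis by simp
  qed
  have "integrable ?P (\<lambda>\<omega>. f (?\<phi> \<omega>))"
    using f distr integrable_distr_eq[OF meas fm] by simp
  moreover have "integrable ?P (\<lambda>\<omega>. f (?\<phi> \<omega>)) \<longleftrightarrow> integrable ?P (\<lambda>\<omega>. f (\<omega> \<circ> \<pi>))"
    using \<phi>_eq by (rule Bochner_Integration.integrable_cong[OF refl])
  ultimately show "integrable ?P (\<lambda>\<omega>. f (\<omega> \<circ> \<pi>))"
    by blast
  have "(\<integral>\<omega>. f \<omega> \<partial>?P) = (\<integral>\<omega>. f (?\<phi> \<omega>) \<partial>?P)"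
    using integral_distr[OF meas fm] distr by simp
  also have "\<dots> = (\<integral>\<omega>. f (\<omega> \<circ> \<pi>) \<partial>?P)"
    using \<phi>_eq by (rule Bochner_Integration.integral_cong[OF refl])
  finally show "(\<integral>\<omega>. f (\<omega> \<circ> \<pi>) \<partial>?P) = (\<integral>\<omega>. f \<omega> \<partial>?P)" ..
qed

lemma integral_PiM_le_of_sum_permutations_le:
  fixes D :: "'a measure" and f :: "('b \<Rightarrow> 'a) \<Rightarrow> real"
  assumes D: "prob_space D" and V: "finite V" and c: "0 \<le> c"
    and bound: "\<And>\<omega>. (\<Sum>\<pi>\<in>{\<pi>. \<pi> permutes V}. f (\<omega> \<circ> \<pi>)) \<le> real (card {\<pi>. \<pi> permutes V}) * c"
  shows "(\<integral>\<omega>. f \<omega> \<partial>Pi\<^sub>M V (\<lambda>_. D)) \<le> c"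
proof (cases "integrable (Pi\<^sub>M V (\<lambda>_. D)) f")
  case False
  then show ?thesis
    using c by (simp add: not_integrable_integral_eq)
next
  case True
  let ?P = "Pi\<^sub>M V (\<lambda>_. D)"
  let ?Perm = "{\<pi>. \<pi> permutes V}"
  interpret P: prob_space ?P
    using D by (intro prob_space_PiM) auto
  have "real (card ?Perm) * (\<integral>\<omega>. f \<omega> \<partial>?P) = (\<Sum>\<pi>\<in>?Perm. \<integral>\<omega>. f (\<omega> \<circ> \<pi>) \<partial>?P)"
    using PiM_compose_permutes(2)[OF D _ True] by simp
  also have "\<dots> = (\<integral>\<omega>. (\<Sum>\<pi>\<in>?Perm. f (\<omega> \<circ> \<pi>)) \<partial>?P)"
    using PiM_compose_permutes(1)[OF D _ True] by (intro Bochner_Integration.integral_sum[symmetric]) auto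
  also have "\<dots> \<le> (\<integral>\<omega>. real (card ?Perm) * c \<partial>?P)"
    using PiM_compose_permutes(1)[OF D _ True] bound by (intro integral_mono) auto
  also have "\<dots> = real (card ?Perm) * c"
    by (simp add: P.prob_space)
  finally show ?thesis
    using card_permutations[OF refl V] by (simp add: mult_le_cancel_left_pos)
qed

theorem proposition1:
  fixes D :: "((real ^ 'd) \<times> real) measure"
    and \<mu> g :: "real ^ 'd \<Rightarrow> real"
    and \<tau> :: "(nat \<Rightarrow> real) \<Rightarrow> real"
    and C U :: "nat set" and \<alpha> :: real
  assumes "prob_space D" and "sets D = sets borel"
    and "\<mu> \<in> borel_measurable borel" and "g \<in> borel_measurable borel"
    and "\<tau> \<in> borel_measurable (Pi\<^sub>M U (\<lambda>_. borel))"
    and "finite C" and "finite U" and "C \<inter> U = {}"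
    and "0 < \<alpha>" and "\<alpha> < 1"
  shows "FCR (Pi\<^sub>M (C \<union> U) (\<lambda>_. D))
           (\<lambda>\<omega>. sel U \<tau> (score g \<omega>))
           (\<lambda>\<omega> j. PI_AD \<mu> g \<alpha> C U \<tau> \<omega> j)
           (\<lambda>\<omega> j. snd (\<omega> j)) \<le> \<alpha>"
proof -
  have "FCR (Pi\<^sub>M (C \<union> U) (\<lambda>_. D)) (\<lambda>\<omega>. sel U \<tau> (score g \<omega>))
          (\<lambda>\<omega> j. PI_AD \<mu> g \<alpha> C U \<tau> \<omega> j) (\<lambda>\<omega> j. snd (\<omega> j))
      = (\<integral>\<omega>. FDP \<mu> g \<alpha> C U \<tau> \<omega> \<partial>Pi\<^sub>M (C \<union> U) (\<lambda>_. D))"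
    unfolding FCR_def FDP_def ..
  also have "\<dots> \<le> \<alpha>"
    using assms(1,6-9)
    by (intro integral_PiM_le_of_sum_permutations_le sum_permutations_FDP_le) auto
  finally show ?thesis .
qed

end
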